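(* Let $\mathcal N$ be a normal network on $X$. If $\mathcal N$ has at least one reticulation and $|X|\ge 4$, or $\mathcal N$ has at least two reticulations, or $|X|\ge 5$, then $\mathcal N$ displays at least one quad.
   Context: Phylogenetic network on $X$ (rooted, binary): rooted acyclic digraph without parallel arcs; root has in-degree $0$, out-degree $2$; leaves (out-degree $0$) have in-degree $1$ and form $X$; other vertices are tree vertices (in-degree $1$, out-degree $2$) or reticulations (in-degree $2$, out-degree $1$). A reticulation arc $(u,v)$ is a shortcut if another directed path from $u$ to $v$ exists. Tree-child: every non-leaf vertex has a child that is a tree vertex or leaf; normal: tree-child with no shortcuts. A quad is a caterpillar on four leaves, i.e. a rooted binary phylogenetic tree $(x_1,x_2,x_3,x_4)$ in which $x_1,x_2$ share a parent $p$, the parent of $x_3$ is the parent of $p$, and the parent of $x_4$ is the parent of the parent of $x_3$. The network displays a tree on a subset of $X$ if the tree can be obtained from the network by deleting arcs and vertices and suppressing in-degree-one out-degree-one vertices. *)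

theory Defs
  imports Main
begin

text \<open>A rooted digraph is given by a vertex set V, an arc set A \<subseteq> V \<times> V
  (a set of pairs, so there are no parallel arcs) and a root r.\<close>

definition indeg :: "('v \<times> 'v) set \<Rightarrow> 'v \<Rightarrow> nat" where
  "indeg A v = card {u. (u, v) \<in> A}"

definition outdeg :: "('v \<times> 'v) set \<Rightarrow> 'v \<Rightarrow> nat" where
  "outdeg A v = card {w. (v, w) \<in> A}"

definition is_tree_vertex :: "'v set \<Rightarrow> ('v \<times> 'v) set \<Rightarrow> 'v \<Rightarrow> bool" where
  "is_tree_vertex V A v \<longleftrightarrow> v \<in> V \<and> indeg A v = 1 \<and> outdeg A v = 2"

definition is_reticulation :: "'v set \<Rightarrow> ('v \<times> 'v) set \<Rightarrow> 'v \<Rightarrow> bool" where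
  "is_reticulation V A v \<longleftrightarrow> v \<in> V \<and> indeg A v = 2 \<and> outdeg A v = 1"

definition reticulations :: "'v set \<Rightarrow> ('v \<times> 'v) set \<Rightarrow> 'v set" where
  "reticulations V A = {v. is_reticulation V A v}"

definition phylo_network :: "'v set \<Rightarrow> ('v \<times> 'v) set \<Rightarrow> 'v \<Rightarrow> 'v set \<Rightarrow> bool" where
  "phylo_network V A r X \<longleftrightarrow>
     finite V \<and> A \<subseteq> V \<times> V \<and> acyclic A \<and>
     r \<in> V \<and> indeg A r = 0 \<and> outdeg A r = 2 \<and>
     X = {v \<in> V. outdeg A v = 0} \<and>
     (\<forall>x \<in> X. indeg A x = 1) \<and>
     (\<forall>v \<in> V - X - {r}. is_tree_vertex V A v \<or> is_reticulation V A v)"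

definition is_shortcut :: "'v set \<Rightarrow> ('v \<times> 'v) set \<Rightarrow> 'v \<times> 'v \<Rightarrow> bool" where
  "is_shortcut V A e \<longleftrightarrow> e \<in> A \<and> is_reticulation V A (snd e) \<and> e \<in> (A - {e})\<^sup>+"

definition tree_child :: "'v set \<Rightarrow> ('v \<times> 'v) set \<Rightarrow> 'v \<Rightarrow> 'v set \<Rightarrow> bool" where
  "tree_child V A r X \<longleftrightarrow> phylo_network V A r X \<and>
     (\<forall>v \<in> V - X. \<exists>w. (v, w) \<in> A \<and> (is_tree_vertex V A w \<or> w \<in> X))"

definition normal_network :: "'v set \<Rightarrow> ('v \<times> 'v) set \<Rightarrow> 'v \<Rightarrow> 'v set \<Rightarrow> bool" where
  "normal_network V A r X \<longleftrightarrow> tree_child V A r X \<and> (\<forall>e. \<not> is_shortcut V A e)"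

definition dpath :: "('v \<times> 'v) set \<Rightarrow> 'v \<Rightarrow> 'v \<Rightarrow> 'v list \<Rightarrow> bool" where
  "dpath A u w P \<longleftrightarrow> P \<noteq> [] \<and> hd P = u \<and> last P = w \<and> distinct P \<and>
     (\<forall>i. Suc i < length P \<longrightarrow> (P ! i, P ! Suc i) \<in> A)"

definition interior :: "'v list \<Rightarrow> 'v set" where
  "interior P = set (tl (butlast P))"

text \<open>The network displays the quad (caterpillar) (x1,x2,x3,x4): some subgraph of the
  network is a subdivision of the tree with internal vertices s (root), q, p and arcs
  p->x1, p->x2, q->p, q->x3, s->q, s->x4. Equivalently, the quad is obtained from the
  network by deleting arcs and vertices and suppressing in-degree-one out-degree-one
  vertices: the images of the tree vertices are distinct and each tree arc is realised
  by a directed path, these paths being internally vertex-disjoint from each other and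
  from the images of the tree vertices.\<close>
definition displays_quad :: "'v set \<Rightarrow> ('v \<times> 'v) set \<Rightarrow> 'v set \<Rightarrow> 'v \<Rightarrow> 'v \<Rightarrow> 'v \<Rightarrow> 'v \<Rightarrow> bool" where
  "displays_quad V A X x1 x2 x3 x4 \<longleftrightarrow>
     {x1, x2, x3, x4} \<subseteq> X \<and>
     (\<exists>s q p P1 P2 P3 P4 P5 P6.
        s \<in> V \<and> q \<in> V \<and> p \<in> V \<and>
        distinct [s, q, p, x1, x2, x3, x4] \<and>
        dpath A p x1 P1 \<and> dpath A p x2 P2 \<and> dpath A q p P3 \<and>
        dpath A q x3 P4 \<and> dpath A s q P5 \<and> dpath A s x4 P6 \<and>
        (let Ps = [P1, P2, P3, P4, P5, P6] in
          (\<forall>i < 6. \<forall>j < 6. i \<noteq> j \<longrightarrow> interior (Ps ! i) \<inter> interior (Ps ! j) = {}) \<and>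
          (\<forall>i < 6. interior (Ps ! i) \<inter> {s, q, p, x1, x2, x3, x4} = {})))"

end

theory Submission
  imports Defs
begin

text \<open>
  Call the root and the tree vertices, i.e. the vertices of out-degree two, branching, and call a
  branching vertex v a near child of a branching vertex u if v is a child of u or the child of a
  reticulation child of u.

  Suppose s, q, p is a chain of near children. From the two children of p, the child of q off
  the chain and the child of s off the chain, follow paths to leaves through vertices of in-degree
  one; they exist because the network is tree-child, and because it has no shortcuts they are
  pairwise disjoint and avoid the chain. Together with the paths from s to q and from q to p they
  display a quad.

  Otherwise every branching vertex other than the root is a near child of the root, which has at
  most two, so there are at most three branching vertices. Counting arcs by tails and by heads
  gives |X| + |R| = |B| + 1 for the sets of leaves, reticulations and branching vertices, and
  since the parents of a reticulation are distinct branching vertices, none of which has two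
  reticulation children (one of its children is a tree vertex or a leaf), 2|R| \<le> |B|. With
  |B| \<le> 3 each of the three hypotheses fails.
\<close>

lemma trancl_avoiding_arc:
  assumes "(u, v) \<in> R\<^sup>+" and "(x, v) \<notin> R\<^sup>*"
  shows "(u, v) \<in> (R - {(u, x)})\<^sup>+"
  using assms
proof (induction rule: trancl_induct)
  case (base y)
  then show ?case by auto
next
  case (step y z)
  then have "(x, y) \<notin> R\<^sup>*"
    by (meson rtrancl.rtrancl_into_rtrancl)
  then have "(u, y) \<in> (R - {(u, x)})\<^sup>+"
    using step.IH by blast
  moreover have "(y, z) \<in> R - {(u, x)}"
    using step by auto
  ultimately show ?case by (rule trancl_into_trancl)
qed

lemma card_arcs_eq_sum_outdeg:
  assumes "finite V" and "A \<subseteq> V \<times> V"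
  shows "card A = (\<Sum>v\<in>V. outdeg A v)"
proof -
  have "A = (SIGMA v:V. {w. (v, w) \<in> A})"
    using assms(2) by auto
  moreover have "\<And>v. finite {w. (v, w) \<in> A}"
    using assms by (auto intro: finite_subset[of _ V])
  ultimately show ?thesis
    using assms(1) card_SigmaI[of V "\<lambda>v. {w. (v, w) \<in> A}"] by (simp add: outdeg_def)
qed

lemma card_arcs_eq_sum_indeg:
  assumes "finite V" and "A \<subseteq> V \<times> V"
  shows "card A = (\<Sum>v\<in>V. indeg A v)"
proof -
  have "card A = card (A\<inverse>)"
    by simp
  also have "\<dots> = (\<Sum>v\<in>V. outdeg (A\<inverse>) v)"
    using assms by (intro card_arcs_eq_sum_outdeg) auto
  finally show ?thesis
    by (simp add: outdeg_def indeg_def)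
qed

lemma dpath_Cons:
  assumes "(u, x) \<in> A" and "u \<notin> set T" and "dpath A x w T"
  shows "dpath A u w (u # T)"
  using assms unfolding dpath_def
  by (auto simp: nth_Cons hd_conv_nth split: nat.split)

lemma interior_Cons: "T \<noteq> [] \<Longrightarrow> interior (u # T) = set (butlast T)"
  by (simp add: interior_def)

lemma outdeg_2_other_child: "outdeg A v = 2 \<Longrightarrow> (v, c) \<in> A \<Longrightarrow> \<exists>c'. (v, c') \<in> A \<and> c' \<noteq> c"
  unfolding outdeg_def by (auto simp: card_2_iff)

lemma outdeg_2_two_children: "outdeg A v = 2 \<Longrightarrow> \<exists>a b. (v, a) \<in> A \<and> (v, b) \<in> A \<and> a \<noteq> b"
  unfolding outdeg_def card_2_iff by blast

lemma dpath_last_split: "dpath A u x (u # T) \<Longrightarrow> T \<noteq> [] \<Longrightarrow> T = butlast T @ [x]"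
  unfolding dpath_def by (metis append_butlast_last_id last_ConsR)

lemma displays_quadI:
  assumes P1: "dpath A p x1 (p # T1)" and P2: "dpath A p x2 (p # T2)"
    and P4: "dpath A q x3 (q # T3)" and P6: "dpath A s x4 (s # T4)"
    and P3: "dpath A q p P" and P5: "dpath A s q Q"
    and nonempty: "T1 \<noteq> []" "T2 \<noteq> []" "T3 \<noteq> []" "T4 \<noteq> []"
    and leaves: "{x1, x2, x3, x4} \<subseteq> X" and "s \<in> V" "q \<in> V" "p \<in> V"
    and distinct: "distinct ([s, q, p] @ T1 @ T2 @ T3 @ T4)"
    and interiors: "interior P \<inter> set ([s, q, p] @ T1 @ T2 @ T3 @ T4) = {}"
      "interior Q \<inter> set ([s, q, p] @ T1 @ T2 @ T3 @ T4) = {}"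
      "interior P \<inter> interior Q = {}"
  shows "displays_quad V A X x1 x2 x3 x4"
proof -
  define B1 B2 B3 B4 where "B1 = butlast T1" "B2 = butlast T2" "B3 = butlast T3" "B4 = butlast T4"
  have T: "T1 = B1 @ [x1]" "T2 = B2 @ [x2]" "T3 = B3 @ [x3]" "T4 = B4 @ [x4]"
    using dpath_last_split[OF P1 nonempty(1)] dpath_last_split[OF P2 nonempty(2)]
      dpath_last_split[OF P4 nonempty(3)] dpath_last_split[OF P6 nonempty(4)]
    unfolding B1_B2_B3_B4_def by simp_all
  let ?Ps = "[p # T1, p # T2, P, q # T3, Q, s # T4]"
  have pairwise: "\<forall>i<6. \<forall>j<6. i \<noteq> j \<longrightarrow> interior (?Ps ! i) \<inter> interior (?Ps ! j) = {}"
    using distinct interiors unfolding T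
    by (simp add: numeral_eq_Suc All_less_Suc interior_Cons Int_Un_distrib Int_commute)
  have avoid: "\<forall>i<6. interior (?Ps ! i) \<inter> {s, q, p, x1, x2, x3, x4} = {}"
    using distinct interiors unfolding T
    by (simp add: numeral_eq_Suc All_less_Suc interior_Cons Int_Un_distrib Int_commute)
  have "distinct [s, q, p, x1, x2, x3, x4]"
    using distinct unfolding T by simp
  with pairwise avoid leaves \<open>s \<in> V\<close> \<open>q \<in> V\<close> \<open>p \<in> V\<close> P1 P2 P3 P4 P5 P6 show ?thesis
    unfolding displays_quad_def Let_def by blast
qed

locale normal_phylo_network =
  fixes V :: "'v set" and A :: "('v \<times> 'v) set" and r :: 'v and X :: "'v set"
  assumes normal: "normal_network V A r X"
begin

lemma finite_V: "finite V" and arcs_subset: "A \<subseteq> V \<times> V" and acyclic_A: "acyclic A"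
  and root_in_V: "r \<in> V" and indeg_root: "indeg A r = 0" and outdeg_root: "outdeg A r = 2"
  and leaves_eq: "X = {v \<in> V. outdeg A v = 0}"
  and indeg_leaf: "\<And>x. x \<in> X \<Longrightarrow> indeg A x = 1"
  and vertex_cases: "\<And>v. v \<in> V - X - {r} \<Longrightarrow> is_tree_vertex V A v \<or> is_reticulation V A v"
  and tree_child: "\<And>v. v \<in> V - X \<Longrightarrow> \<exists>w. (v, w) \<in> A \<and> (is_tree_vertex V A w \<or> w \<in> X)"
  and no_shortcut: "\<And>e. \<not> is_shortcut V A e"
  using normal unfolding normal_network_def tree_child_def phylo_network_def by blast+

lemma finite_A: "finite A"
  using finite_V arcs_subset finite_subset by blast

lemma finite_parents: "finite {u. (u, v) \<in> A}"
  and finite_children: "finite {w. (v, w) \<in> A}"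
  using arcs_subset by (auto intro: finite_subset[OF _ finite_V])

lemma arc_tail_in_V: "(u, v) \<in> A \<Longrightarrow> u \<in> V"
  and arc_head_in_V: "(u, v) \<in> A \<Longrightarrow> v \<in> V"
  using arcs_subset by auto

lemma wf_converse_A: "wf (A\<inverse>)"
  using finite_A acyclic_A by (simp add: wf_iff_acyclic_if_finite)

lemma no_cycle: "(x, y) \<in> A\<^sup>+ \<Longrightarrow> (y, x) \<in> A\<^sup>* \<Longrightarrow> False"
  using acyclic_A unfolding acyclic_def by (meson rtrancl_trancl_trancl)

lemma parent_unique: "indeg A v = 1 \<Longrightarrow> (u, v) \<in> A \<Longrightarrow> (u', v) \<in> A \<Longrightarrow> u = u'"
  using card_le_Suc0_iff_eq[OF finite_parents, of v] unfolding indeg_def by auto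

lemma child_unique: "outdeg A v = 1 \<Longrightarrow> (v, w) \<in> A \<Longrightarrow> (v, w') \<in> A \<Longrightarrow> w = w'"
  using card_le_Suc0_iff_eq[OF finite_children, of v] unfolding outdeg_def by auto

lemma arc_head_not_root: "(u, v) \<in> A \<Longrightarrow> v \<noteq> r"
  using indeg_root card_0_eq[OF finite_parents, of r] unfolding indeg_def by blast

lemma arc_tail_not_leaf: "(u, v) \<in> A \<Longrightarrow> u \<notin> X"
  using leaves_eq card_0_eq[OF finite_children, of u] unfolding outdeg_def by blast

lemma two_parents_reticulation:
  assumes "(u, v) \<in> A" and "(u', v) \<in> A" and "u \<noteq> u'"
  shows "is_reticulation V A v"
proof -
  have "card {u, u'} \<le> indeg A v"
    unfolding indeg_def using assms by (intro card_mono[OF finite_parents]) auto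
  then have "indeg A v \<ge> 2"
    using assms(3) by simp
  then have "v \<in> V - X - {r}"
    using assms(1) arc_head_in_V arc_head_not_root indeg_leaf by fastforce
  with \<open>indeg A v \<ge> 2\<close> show ?thesis
    using vertex_cases[of v] unfolding is_tree_vertex_def by auto
qed

text \<open>Normality enters here: a second path from u to x would make the arc (u, x) a shortcut.\<close>
lemma no_shortcut_child:
  assumes ux: "(u, x) \<in> A" and wx: "(w, x) \<in> A" and uw: "(u, w) \<in> A\<^sup>+"
  shows False
proof -
  have "u \<noteq> w"
    using uw no_cycle by blast
  then have "is_reticulation V A x"
    using two_parents_reticulation ux wx by blast
  moreover have "(x, w) \<notin> A\<^sup>*"
    using wx no_cycle by blast
  then have "(u, w) \<in> (A - {(u, x)})\<^sup>+"
    using trancl_avoiding_arc[OF uw] by blast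
  then have "(u, x) \<in> (A - {(u, x)})\<^sup>+"
    using wx \<open>u \<noteq> w\<close> by (simp add: trancl_into_trancl)
  ultimately have "is_shortcut V A (u, x)"
    using ux unfolding is_shortcut_def by simp
  then show False
    using no_shortcut by blast
qed

section \<open>Tree paths\<close>

inductive tree_path :: "'v \<Rightarrow> 'v list \<Rightarrow> bool" where
  leaf: "x \<in> X \<Longrightarrow> tree_path x [x]"
| step: "(x, w) \<in> A \<Longrightarrow> indeg A w = 1 \<Longrightarrow> tree_path w T \<Longrightarrow> x \<notin> set T \<Longrightarrow> tree_path x (x # T)"

lemma tree_path_hd: "tree_path x T \<Longrightarrow> T \<noteq> [] \<and> hd T = x"
  by (induction rule: tree_path.induct) auto

lemma tree_path_last: "tree_path x T \<Longrightarrow> last T \<in> X"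
  by (induction rule: tree_path.induct) (auto dest: tree_path_hd)

lemma tree_path_distinct: "tree_path x T \<Longrightarrow> distinct T"
  by (induction rule: tree_path.induct) auto

lemma tree_path_reach: "tree_path x T \<Longrightarrow> v \<in> set T \<Longrightarrow> (x, v) \<in> A\<^sup>*"
  by (induction rule: tree_path.induct) (auto intro: converse_rtrancl_into_rtrancl)

lemma tree_path_dpath: "tree_path x T \<Longrightarrow> dpath A x (last T) T"
proof (induction rule: tree_path.induct)
  case (leaf x)
  then show ?case by (simp add: dpath_def)
next
  case (step x w T)
  then have "dpath A x (last T) (x # T)"
    by (blast intro: dpath_Cons)
  then show ?case
    using tree_path_hd[OF step.hyps(3)] by simp
qed

lemma tree_path_parent:
  "tree_path x T \<Longrightarrow> v \<in> set T \<Longrightarrow> v \<noteq> x \<Longrightarrow> (u, v) \<in> A \<Longrightarrow> u \<in> set T"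
proof (induction rule: tree_path.induct)
  case (leaf x)
  then show ?case by simp
next
  case (step x w T)
  show ?case
  proof (cases "v = w")
    case True
    then show ?thesis
      using step.hyps(1,2) step.prems(3) parent_unique[of w u x] by simp
  next
    case False
    then show ?thesis
      using step tree_path_hd by auto
  qed
qed

lemma tree_path_exists: "x \<in> V \<Longrightarrow> \<exists>T. tree_path x T"
proof (induction x rule: wf_induct[OF wf_converse_A])
  case (1 x)
  show ?case
  proof (cases "x \<in> X")
    case True
    then show ?thesis by (blast intro: tree_path.leaf)
  next
    case False
    then obtain w where xw: "(x, w) \<in> A" and w: "is_tree_vertex V A w \<or> w \<in> X"
      using tree_child "1.prems" by blast
    then obtain T where T: "tree_path w T"
      using "1.IH" arc_head_in_V by blast
    have "indeg A w = 1"
      using w indeg_leaf unfolding is_tree_vertex_def by blast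
    moreover have "x \<notin> set T"
    proof
      assume "x \<in> set T"
      then have "(w, x) \<in> A\<^sup>*"
        by (rule tree_path_reach[OF T])
      with xw show False
        using no_cycle by blast
    qed
    ultimately show ?thesis
      using tree_path.step[OF xw _ T] by blast
  qed
qed

lemma tree_path_ancestor:
  assumes T: "tree_path x T" and "(z, v) \<in> A\<^sup>*" and "v \<in> set T"
  shows "(z, x) \<in> A\<^sup>* \<or> z \<in> set T"
  using assms(2,3)
proof (induction rule: rtrancl_induct)
  case base
  then show ?case by simp
next
  case (step u v)
  show ?case
  proof (cases "v = x")
    case True
    then show ?thesis
      using step.hyps by auto
  next
    case False
    have "u \<in> set T"
      using tree_path_parent[OF T step.prems False step.hyps(2)] .
    then show ?thesis
      using step.IH by blast
  qed
qed

lemma tree_paths_disjoint: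
  assumes Tx: "tree_path x Tx" and Ty: "tree_path y Ty"
    and "x \<noteq> y" and "x \<notin> set Ty" and "y \<notin> set Tx"
  shows "set Tx \<inter> set Ty = {}"
proof (rule ccontr)
  assume "set Tx \<inter> set Ty \<noteq> {}"
  then obtain w where w: "w \<in> set Tx" "w \<in> set Ty"
    by blast
  have "(y, x) \<in> A\<^sup>*"
    using tree_path_ancestor[OF Tx tree_path_reach[OF Ty w(2)] w(1)] assms(5) by blast
  moreover have "(x, y) \<in> A\<^sup>*"
    using tree_path_ancestor[OF Ty tree_path_reach[OF Tx w(1)] w(2)] assms(4) by blast
  ultimately show False
    using \<open>x \<noteq> y\<close> no_cycle by (meson rtranclD)
qed

lemma tree_path_notin_strict_ancestor: "tree_path x T \<Longrightarrow> (v, x) \<in> A\<^sup>+ \<Longrightarrow> v \<notin> set T"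
  using tree_path_reach no_cycle by blast

lemma tree_path_notin_child: "tree_path x T \<Longrightarrow> (u, v) \<in> A \<Longrightarrow> u \<notin> set T \<Longrightarrow> v \<noteq> x \<Longrightarrow> v \<notin> set T"
  using tree_path_parent by blast

lemma tree_paths_disjoint_from_parents:
  assumes "tree_path x Tx" and "tree_path y Ty" and "(u, x) \<in> A" and "(w, y) \<in> A"
    and "x \<noteq> y" and "u \<notin> set Ty" and "w \<notin> set Tx"
  shows "set Tx \<inter> set Ty = {}"
  using assms tree_paths_disjoint tree_path_notin_child by metis

section \<open>Chains of near children display quads\<close>

definition branching :: "'v set" where
  "branching = {v \<in> V. outdeg A v = 2}"

definition link :: "'v \<Rightarrow> 'v \<Rightarrow> 'v \<Rightarrow> bool" where
  "link u c v \<longleftrightarrow> (u, c) \<in> A \<and> (c = v \<or> is_reticulation V A c \<and> (c, v) \<in> A)"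

definition near_child :: "'v \<Rightarrow> 'v \<Rightarrow> bool" where
  "near_child u v \<longleftrightarrow> u \<in> branching \<and> v \<in> branching \<and> (\<exists>c. link u c v)"

lemma link_reach: "link u c v \<Longrightarrow> (u, c) \<in> A\<^sup>+ \<and> (c, v) \<in> A\<^sup>* \<and> (u, v) \<in> A\<^sup>+"
  unfolding link_def by auto

lemma link_dpath:
  assumes "link u c v"
  obtains P where "dpath A u v P" and "interior P = {c} - {v}"
proof (cases "c = v")
  case True
  then have "dpath A u v [u, v]"
    using assms no_cycle unfolding link_def dpath_def by auto
  with True that show ?thesis
    by (simp add: interior_def)
next
  case False
  then have uc: "(u, c) \<in> A" and cv: "(c, v) \<in> A"
    using assms unfolding link_def by auto
  then have "u \<noteq> c" "c \<noteq> v" "u \<noteq> v"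
    using no_cycle by (blast, blast, meson r_into_rtrancl trancl.intros)
  with uc cv have "dpath A u v [u, c, v]"
    unfolding dpath_def by (auto simp: less_Suc_eq nth_Cons split: nat.splits)
  with False that show ?thesis
    by (simp add: interior_def)
qed

lemma link_other_child: "link u c v \<Longrightarrow> (u, y) \<in> A \<Longrightarrow> y \<noteq> c \<Longrightarrow> y \<noteq> v"
  unfolding link_def using no_shortcut_child by blast

lemma link_below:
  assumes "link u c v" and "(w, u) \<in> A\<^sup>+" and "(w, y) \<in> A"
  shows "y \<noteq> v" and "y \<noteq> c"
proof -
  have "(u, c) \<in> A"
    using assms(1) unfolding link_def by simp
  then show "y \<noteq> c"
    using assms(2,3) no_shortcut_child by blast
  show "y \<noteq> v"
  proof (cases "c = v")
    case True
    then show ?thesis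
      using \<open>y \<noteq> c\<close> by simp
  next
    case False
    then have "(c, v) \<in> A"
      using assms(1) unfolding link_def by simp
    moreover have "(w, c) \<in> A\<^sup>+"
      using assms(2) \<open>(u, c) \<in> A\<close> by simp
    ultimately show ?thesis
      using assms(3) no_shortcut_child by blast
  qed
qed

lemma link_notin_tree_path:
  assumes "link u c v" and "tree_path y T" and "y \<noteq> v" and "y \<noteq> c" and "u \<notin> set T"
  shows "v \<notin> set T" and "c \<notin> set T"
proof -
  have uc: "(u, c) \<in> A" and "c = v \<or> is_reticulation V A c \<and> (c, v) \<in> A"
    using assms(1) unfolding link_def by auto
  moreover have "c \<notin> set T"
    using tree_path_notin_child[OF assms(2) uc assms(5) assms(4)[symmetric]] .
  ultimately show "v \<notin> set T" "c \<notin> set T"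
    using tree_path_notin_child[OF assms(2) _ _ assms(3)[symmetric]] by auto
qed

context
  fixes s cs q cq p q' p' a b :: 'v
  assumes link_sq: "link s cs q" and link_qp: "link q cq p"
    and s_q': "(s, q') \<in> A" "q' \<noteq> cs" and q_p': "(q, p') \<in> A" "p' \<noteq> cq"
    and p_a: "(p, a) \<in> A" and p_b: "(p, b) \<in> A" and "a \<noteq> b"
begin

lemma chain_reach: "(s, q) \<in> A\<^sup>+" "(q, p) \<in> A\<^sup>+" "(s, p) \<in> A\<^sup>+"
  using link_reach[OF link_sq] link_reach[OF link_qp] by auto

lemma chain_children_distinct:
  "distinct [a, b, p', q']" "p' \<noteq> p" "q' \<noteq> q" "q' \<noteq> p" "q' \<noteq> cq"
proof -
  show "distinct [a, b, p', q']"
    using \<open>a \<noteq> b\<close> chain_reach p_a p_b q_p'(1) s_q'(1) no_shortcut_child by auto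
  show "p' \<noteq> p"
    using link_other_child[OF link_qp q_p'] .
  show "q' \<noteq> q"
    using link_other_child[OF link_sq s_q'] .
  show "q' \<noteq> p" "q' \<noteq> cq"
    using link_below[OF link_qp chain_reach(1) s_q'(1)] by auto
qed

lemma chain_tree_paths:
  assumes Ta: "tree_path a Ta" and Tb: "tree_path b Tb"
    and Tp: "tree_path p' Tp" and Tq: "tree_path q' Tq"
  shows "distinct ([s, q, p] @ Ta @ Tb @ Tp @ Tq)"
    and "cq \<noteq> p \<Longrightarrow> cq \<notin> set ([s, q, p] @ Ta @ Tb @ Tp @ Tq)"
    and "cs \<noteq> q \<Longrightarrow> cs \<notin> set ([s, q, p] @ Ta @ Tb @ Tp @ Tq)"
proof -
  note reach = chain_reach link_reach[OF link_sq] link_reach[OF link_qp]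
  note distinct_children = chain_children_distinct
  have above_a_b: "(v, p) \<in> A\<^sup>* \<Longrightarrow> v \<notin> set Ta \<and> v \<notin> set Tb" for v
    using tree_path_notin_strict_ancestor[OF Ta] tree_path_notin_strict_ancestor[OF Tb] p_a p_b
    by (meson rtrancl_into_trancl1)
  have above_p': "(v, q) \<in> A\<^sup>* \<Longrightarrow> v \<notin> set Tp" for v
    using tree_path_notin_strict_ancestor[OF Tp] q_p'(1) by (meson rtrancl_into_trancl1)
  have s_notin: "s \<notin> set Tq"
    using tree_path_notin_strict_ancestor[OF Tq] s_q'(1) by blast
  have q_cs_notin: "q \<notin> set Tq" "cs \<notin> set Tq"
    using link_notin_tree_path[OF link_sq Tq distinct_children(3) s_q'(2) s_notin] by auto
  have p_cq_notin: "p \<notin> set Tp" "cq \<notin> set Tp" "p \<notin> set Tq" "cq \<notin> set Tq"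
    using link_notin_tree_path[OF link_qp Tp distinct_children(2) q_p'(2) above_p'[of q]]
      link_notin_tree_path[OF link_qp Tq distinct_children(4,5) q_cs_notin(1)] by auto
  have s_q_p: "s \<notin> set Ta \<and> s \<notin> set Tb" "q \<notin> set Ta \<and> q \<notin> set Tb"
    "p \<notin> set Ta \<and> p \<notin> set Tb" "s \<notin> set Tp" "q \<notin> set Tp"
    using above_a_b above_p' reach by (auto intro: trancl_into_rtrancl)
  have "set Ta \<inter> set Tb = {}" "set Ta \<inter> set Tp = {}" "set Ta \<inter> set Tq = {}"
    "set Tb \<inter> set Tp = {}" "set Tb \<inter> set Tq = {}" "set Tp \<inter> set Tq = {}"
    using tree_paths_disjoint_from_parents[OF Ta Tb p_a p_b] tree_paths_disjoint_from_parents[OF Ta Tp p_a q_p'(1)]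
      tree_paths_disjoint_from_parents[OF Ta Tq p_a s_q'(1)] tree_paths_disjoint_from_parents[OF Tb Tp p_b q_p'(1)]
      tree_paths_disjoint_from_parents[OF Tb Tq p_b s_q'(1)] tree_paths_disjoint_from_parents[OF Tp Tq q_p'(1) s_q'(1)]
      distinct_children(1) s_q_p p_cq_notin q_cs_notin by auto
  moreover have "distinct [s, q, p]"
    using reach no_cycle by fastforce
  ultimately show "distinct ([s, q, p] @ Ta @ Tb @ Tp @ Tq)"
    using tree_path_distinct[OF Ta] tree_path_distinct[OF Tb] tree_path_distinct[OF Tp]
      tree_path_distinct[OF Tq] s_notin s_q_p p_cq_notin q_cs_notin
    by (simp add: Int_Un_distrib Int_commute)
  show "cq \<notin> set ([s, q, p] @ Ta @ Tb @ Tp @ Tq)" if "cq \<noteq> p"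
  proof -
    have "(cq, p) \<in> A\<^sup>*" "(s, cq) \<in> A\<^sup>+" "(q, cq) \<in> A\<^sup>+"
      using reach by auto
    then show ?thesis
      using that above_a_b[of cq] p_cq_notin no_cycle by auto
  qed
  show "cs \<notin> set ([s, q, p] @ Ta @ Tb @ Tp @ Tq)" if "cs \<noteq> q"
  proof -
    have "(cs, q) \<in> A\<^sup>*" "(cs, p) \<in> A\<^sup>+" "(s, cs) \<in> A\<^sup>+"
      using reach by auto
    then show ?thesis
      using that above_a_b[of cs] above_p'[of cs] q_cs_notin no_cycle
      by (auto intro: trancl_into_rtrancl)
  qed
qed

end

lemma near_child_chain_displays_quad:
  assumes "near_child s q" and "near_child q p"
  shows "\<exists>x1 x2 x3 x4. displays_quad V A X x1 x2 x3 x4"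
proof -
  obtain cs cq where link_sq: "link s cs q" and link_qp: "link q cq p"
    using assms unfolding near_child_def by blast
  have out2: "outdeg A s = 2" "outdeg A q = 2" "outdeg A p = 2"
    using assms unfolding near_child_def branching_def by auto
  obtain q' where s_q': "(s, q') \<in> A" "q' \<noteq> cs"
    using outdeg_2_other_child[OF out2(1)] link_sq unfolding link_def by blast
  obtain p' where q_p': "(q, p') \<in> A" "p' \<noteq> cq"
    using outdeg_2_other_child[OF out2(2)] link_qp unfolding link_def by blast
  obtain a b where p_a: "(p, a) \<in> A" and p_b: "(p, b) \<in> A" and "a \<noteq> b"
    using outdeg_2_two_children[OF out2(3)] by blast
  obtain Ta Tb Tp Tq where T: "tree_path a Ta" "tree_path b Tb" "tree_path p' Tp" "tree_path q' Tq"
    using tree_path_exists[OF arc_head_in_V[OF p_a]] tree_path_exists[OF arc_head_in_V[OF p_b]]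
      tree_path_exists[OF arc_head_in_V[OF q_p'(1)]] tree_path_exists[OF arc_head_in_V[OF s_q'(1)]]
    by blast
  note chain = chain_tree_paths[OF link_sq link_qp s_q' q_p' p_a p_b \<open>a \<noteq> b\<close> T]
  obtain P where P: "dpath A q p P" "interior P = {cq} - {p}"
    using link_dpath[OF link_qp] .
  obtain Q where Q: "dpath A s q Q" "interior Q = {cs} - {q}"
    using link_dpath[OF link_sq] .
  have "cs \<noteq> cq"
    using link_reach[OF link_sq] link_reach[OF link_qp] no_cycle by blast
  have "displays_quad V A X (last Ta) (last Tb) (last Tp) (last Tq)"
  proof (rule displays_quadI)
    show "dpath A p (last Ta) (p # Ta)" "dpath A p (last Tb) (p # Tb)"
      "dpath A q (last Tp) (q # Tp)" "dpath A s (last Tq) (s # Tq)"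
      using dpath_Cons[OF _ _ tree_path_dpath] T p_a p_b q_p'(1) s_q'(1) chain(1) by auto
    show "dpath A q p P" "dpath A s q Q"
      using P Q by simp_all
    show "Ta \<noteq> []" "Tb \<noteq> []" "Tp \<noteq> []" "Tq \<noteq> []"
      using T tree_path_hd by auto
    show "{last Ta, last Tb, last Tp, last Tq} \<subseteq> X"
      using T tree_path_last by auto
    show "s \<in> V" "q \<in> V" "p \<in> V"
      using s_q' q_p' p_a arc_tail_in_V by auto
    show "distinct ([s, q, p] @ Ta @ Tb @ Tp @ Tq)"
      by (rule chain(1))
    show "interior P \<inter> set ([s, q, p] @ Ta @ Tb @ Tp @ Tq) = {}"
      using P(2) chain(2) by auto
    show "interior Q \<inter> set ([s, q, p] @ Ta @ Tb @ Tp @ Tq) = {}"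
      using Q(2) chain(3) by auto
    show "interior P \<inter> interior Q = {}"
      using P(2) Q(2) \<open>cs \<noteq> cq\<close> by auto
  qed
  then show ?thesis
    by blast
qed

section \<open>Counting branching vertices\<close>

lemma root_branching: "r \<in> branching"
  using root_in_V outdeg_root unfolding branching_def by simp

lemma finite_branching: "finite branching"
  using finite_V unfolding branching_def by simp

lemma branching_cases: "u \<in> branching \<Longrightarrow> u = r \<or> is_tree_vertex V A u"
  using leaves_eq vertex_cases[of u] unfolding branching_def is_reticulation_def by force

lemma vertex_classes:
  "V = branching \<union> reticulations V A \<union> X"
  "branching \<inter> reticulations V A = {}" "branching \<inter> X = {}" "reticulations V A \<inter> X = {}"
  using vertex_cases root_branching leaves_eq
  unfolding branching_def reticulations_def is_reticulation_def is_tree_vertex_def by auto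

lemma finite_reticulations: "finite (reticulations V A)"
  and finite_leaves: "finite X"
  using finite_V vertex_classes(1) by (metis finite_Un)+

lemma parent_cases: "(w, u) \<in> A \<Longrightarrow> w \<in> branching \<or> is_reticulation V A w"
  using vertex_classes arc_tail_in_V arc_tail_not_leaf unfolding reticulations_def by blast

lemma reticulation_parent_branching:
  assumes "is_reticulation V A h" and "(w, h) \<in> A"
  shows "w \<in> branching"
proof (rule ccontr)
  assume "w \<notin> branching"
  then have "is_reticulation V A w"
    using parent_cases assms(2) by blast
  obtain c where "(w, c) \<in> A" and "is_tree_vertex V A c \<or> c \<in> X"
    using tree_child arc_tail_in_V[OF assms(2)] arc_tail_not_leaf[OF assms(2)] by blast
  moreover have "c = h"
    using child_unique \<open>is_reticulation V A w\<close> \<open>(w, c) \<in> A\<close> assms(2)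
    unfolding is_reticulation_def by blast
  ultimately show False
    using assms(1) indeg_leaf unfolding is_reticulation_def is_tree_vertex_def by auto
qed

lemma branching_has_near_parent:
  assumes "u \<in> branching" and "u \<noteq> r"
  shows "\<exists>w. near_child w u"
proof -
  have "indeg A u = 1"
    using branching_cases assms unfolding is_tree_vertex_def by blast
  then have "{w. (w, u) \<in> A} \<noteq> {}"
    unfolding indeg_def by (metis card.empty zero_neq_one)
  then obtain w where wu: "(w, u) \<in> A"
    by blast
  show ?thesis
  proof (cases "w \<in> branching")
    case True
    then show ?thesis
      using wu assms(1) unfolding near_child_def link_def by blast
  next
    case False
    then have ret: "is_reticulation V A w"
      using parent_cases wu by blast
    then have "{w'. (w', w) \<in> A} \<noteq> {}"
      unfolding is_reticulation_def indeg_def by (metis card.empty zero_neq_numeral)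
    then obtain w' where "(w', w) \<in> A"
      by blast
    then show ?thesis
      using reticulation_parent_branching ret wu assms(1) unfolding near_child_def link_def by blast
  qed
qed

lemma card_near_children_root: "card {u. near_child r u} \<le> 2"
proof -
  define F where "F c = (if is_reticulation V A c then {v. (c, v) \<in> A} else {c})" for c
  have "{u. near_child r u} \<subseteq> (\<Union>c\<in>{c. (r, c) \<in> A}. F c)"
    unfolding near_child_def link_def F_def branching_def is_reticulation_def by force
  then have "card {u. near_child r u} \<le> card (\<Union>c\<in>{c. (r, c) \<in> A}. F c)"
    by (intro card_mono) (auto simp: F_def finite_children)
  also have "\<dots> \<le> (\<Sum>c\<in>{c. (r, c) \<in> A}. card (F c))"
    by (rule card_UN_le[OF finite_children])
  also have "\<dots> \<le> (\<Sum>c\<in>{c. (r, c) \<in> A}. 1)"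
    by (intro sum_mono) (simp add: F_def is_reticulation_def outdeg_def)
  also have "\<dots> = 2"
    using outdeg_root unfolding outdeg_def by simp
  finally show ?thesis .
qed

lemma card_branching_if_no_chain:
  assumes "\<not> (\<exists>s q p. near_child s q \<and> near_child q p)"
  shows "card branching \<le> 3"
proof -
  have "branching \<subseteq> insert r {u. near_child r u}"
  proof
    fix u assume "u \<in> branching"
    show "u \<in> insert r {u. near_child r u}"
    proof (cases "u = r")
      case False
      then obtain w where "near_child w u"
        using branching_has_near_parent \<open>u \<in> branching\<close> by blast
      moreover have "w = r"
        using assms branching_has_near_parent calculation unfolding near_child_def by blast
      ultimately show ?thesis by simp
    qed simp
  qed
  moreover have fin: "finite {u. near_child r u}"
    using finite_branching unfolding near_child_def by (auto intro: finite_subset)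
  ultimately have "card branching \<le> card (insert r {u. near_child r u})"
    by (intro card_mono) auto
  also have "\<dots> \<le> Suc (card {u. near_child r u})"
    using fin by (simp add: card_insert_if)
  finally show ?thesis
    using card_near_children_root by simp
qed

lemma sum_vertex_classes: "sum f V = sum f branching + sum f (reticulations V A) + sum f X"
proof -
  have "sum f V = sum f (branching \<union> reticulations V A \<union> X)"
    using vertex_classes(1) by (rule arg_cong)
  also have "\<dots> = sum f (branching \<union> reticulations V A) + sum f X"
    by (rule sum.union_disjoint) (use finite_reticulations finite_leaves finite_branching vertex_classes(3,4) in auto)
  also have "sum f (branching \<union> reticulations V A) = sum f branching + sum f (reticulations V A)"
    by (rule sum.union_disjoint) (use finite_reticulations finite_branching vertex_classes(2) in auto)
  finally show ?thesis .
qed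

lemma sum_indeg_branching: "(\<Sum>v\<in>branching. indeg A v) + 1 = card branching"
proof -
  have "(\<Sum>v\<in>branching - {r}. indeg A v) = (\<Sum>v\<in>branching - {r}. 1)"
    using branching_cases by (intro sum.cong) (auto simp: is_tree_vertex_def)
  then have "(\<Sum>v\<in>branching. indeg A v) = card (branching - {r})"
    using sum.remove[OF finite_branching root_branching, of "indeg A"] indeg_root by simp
  then show ?thesis
    using card_Suc_Diff1[OF finite_branching root_branching] by simp
qed

lemma card_leaves_reticulations: "card X + card (reticulations V A) = card branching + 1"
proof -
  let ?R = "reticulations V A"
  have "card A = (\<Sum>v\<in>branching. outdeg A v) + (\<Sum>v\<in>?R. outdeg A v) + (\<Sum>v\<in>X. outdeg A v)"
    using card_arcs_eq_sum_outdeg[OF finite_V arcs_subset] sum_vertex_classes by simp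
  also have "\<dots> = 2 * card branching + card ?R"
    using leaves_eq by (simp add: branching_def reticulations_def is_reticulation_def)
  finally have out: "card A = 2 * card branching + card ?R" .
  have "card A = (\<Sum>v\<in>branching. indeg A v) + (\<Sum>v\<in>?R. indeg A v) + (\<Sum>v\<in>X. indeg A v)"
    using card_arcs_eq_sum_indeg[OF finite_V arcs_subset] sum_vertex_classes by simp
  also have "\<dots> = (\<Sum>v\<in>branching. indeg A v) + 2 * card ?R + card X"
    using indeg_leaf by (simp add: reticulations_def is_reticulation_def)
  finally show ?thesis
    using out sum_indeg_branching by linarith
qed

lemma reticulation_child_unique:
  assumes uh: "(u, h) \<in> A" and uh': "(u, h') \<in> A"
    and "is_reticulation V A h" and "is_reticulation V A h'"
  shows "h = h'"
proof -
  have "outdeg A u = 2"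
    using reticulation_parent_branching assms(3) uh unfolding branching_def by blast
  then obtain x y where children: "{w. (u, w) \<in> A} = {x, y}"
    unfolding outdeg_def card_2_iff by blast
  obtain c where "(u, c) \<in> A" and "is_tree_vertex V A c \<or> c \<in> X"
    using tree_child arc_tail_in_V[OF uh] arc_tail_not_leaf[OF uh] by blast
  then have "c \<noteq> h" "c \<noteq> h'"
    using assms(3,4) indeg_leaf unfolding is_reticulation_def is_tree_vertex_def by auto
  moreover have "{c, h, h'} \<subseteq> {x, y}"
    using children \<open>(u, c) \<in> A\<close> uh uh' by blast
  ultimately show ?thesis
    by auto
qed

lemma card_reticulations_le: "2 * card (reticulations V A) \<le> card branching"
proof -
  let ?R = "reticulations V A"
  let ?E = "{(u, h). (u, h) \<in> A \<and> is_reticulation V A h}"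
  have "?E\<inverse> = (SIGMA h:?R. {u. (u, h) \<in> A})"
    unfolding reticulations_def by auto
  then have "card ?E = (\<Sum>h\<in>?R. indeg A h)"
    using finite_reticulations finite_parents card_inverse[of ?E] by (simp add: indeg_def)
  also have "\<dots> = 2 * card ?R"
    by (simp add: reticulations_def is_reticulation_def)
  finally have "card ?E = 2 * card ?R" .
  moreover have "card ?E \<le> card branching"
  proof (rule card_inj_on_le[OF _ _ finite_branching])
    show "inj_on fst ?E"
    proof (rule inj_onI)
      fix e e' assume "e \<in> ?E" "e' \<in> ?E" "fst e = fst e'"
      then show "e = e'"
        using reticulation_child_unique[of "fst e" "snd e" "snd e'"] by auto
    qed
    show "fst ` ?E \<subseteq> branching"
      by (auto intro: reticulation_parent_branching)
  qed
  ultimately show ?thesis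
    by simp
qed

end

theorem mainTheorem8:
  fixes V :: "'v set" and A :: "('v \<times> 'v) set" and r :: 'v and X :: "'v set"
  assumes "normal_network V A r X"
    and "(card (reticulations V A) \<ge> 1 \<and> card X \<ge> 4)
         \<or> card (reticulations V A) \<ge> 2 \<or> card X \<ge> 5"
  shows "\<exists>x1 x2 x3 x4. displays_quad V A X x1 x2 x3 x4"
proof -
  interpret normal_phylo_network V A r X
    by unfold_locales (rule assms(1))
  show ?thesis
  proof (cases "\<exists>s q p. near_child s q \<and> near_child q p")
    case True
    then show ?thesis
      using near_child_chain_displays_quad by blast
  next
    case False
    then have "card branching \<le> 3"
      by (rule card_branching_if_no_chain)
    then show ?thesis
      using card_leaves_reticulations card_reticulations_le assms(2) by linarith
  qed
qed

end
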